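(* Let $X=(X(t))_{t\ge0}$ be a centered Gaussian process, self-similar of order $\beta\in(0,1)$, satisfying (H.1) with parameters $\alpha,\lambda,\psi$. Then there exists a continuous function $u_1:(0,\infty)\to\mathbb{R}$ such that for all $s>0$, $$\mathbb{E}\big[(X(s+1)-X(s))^2\big]=2\lambda s^{2\beta-\alpha}(1+u_1(s)).$$ Furthermore, for every $\eta>0$ there exists a constant $C_\eta>0$ such that for all $s\ge\eta$, $|u_1(s)|\le C_\eta s^{-\delta_1}$, where $\delta_1=1-\alpha$ if $\alpha<1$ and $\delta_1=2-\alpha$ if $\alpha\ge1$.
   Context: Self-similar of order $\beta$ means $(X(ct))_{t\ge0}\overset{law}{=}(c^\beta X(t))_{t\ge0}$ for all $c>0$. Let $\phi(x)=\mathbb{E}[X(1)X(x)]$, $x\ge1$, so $\mathbb{E}[X(s)X(t)]=s^{2\beta}\phi(t/s)$ for $0<s\le t$. (H.1): there is $\alpha\in(0,2\beta]$ with $\phi(x)=-\lambda(x-1)^\alpha+\psi(x)$, where $\lambda>0$, $\psi$ is twice differentiable on an open set containing $[1,\infty)$, and there is $C\ge0$ such that for $x\in(1,\infty)$: $|\psi'(x)|\le Cx^{\alpha-1}$, $|\psi''(x)|\le Cx^{-1}(x-1)^{\alpha-1}$, and $\psi'(1)=\beta\psi(1)$ when $\alpha\ge1$. *)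

theory Defs
  imports "HOL-Probability.Probability"
begin

definition gaussian_rv :: "'a measure \<Rightarrow> ('a \<Rightarrow> real) \<Rightarrow> bool" where
  "gaussian_rv M Y \<longleftrightarrow>
     Y \<in> borel_measurable M \<and>
     ((\<exists>\<mu> \<sigma>. \<sigma> > 0 \<and> distributed M lborel Y (normal_density \<mu> \<sigma>)) \<or>
      (\<exists>c. AE \<omega> in M. Y \<omega> = c))"

definition gaussian_process :: "'a measure \<Rightarrow> (real \<Rightarrow> 'a \<Rightarrow> real) \<Rightarrow> bool" where
  "gaussian_process M X \<longleftrightarrow>
     (\<forall>t\<ge>0. X t \<in> borel_measurable M) \<and>
     (\<forall>ts as :: real list. set ts \<subseteq> {0..} \<and> length as = length ts \<longrightarrow>
        gaussian_rv M (\<lambda>\<omega>. \<Sum>i<length ts. as ! i * X (ts ! i) \<omega>))"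

definition centered_process :: "'a measure \<Rightarrow> (real \<Rightarrow> 'a \<Rightarrow> real) \<Rightarrow> bool" where
  "centered_process M X \<longleftrightarrow> (\<forall>t\<ge>0. integrable M (X t) \<and> integral\<^sup>L M (X t) = 0)"

definition self_similar :: "'a measure \<Rightarrow> (real \<Rightarrow> 'a \<Rightarrow> real) \<Rightarrow> real \<Rightarrow> bool" where
  "self_similar M X \<beta> \<longleftrightarrow>
     (\<forall>c>0. \<forall>ts :: real list. set ts \<subseteq> {0..} \<longrightarrow>
        distr M (PiM {..<length ts} (\<lambda>_. borel)) (\<lambda>\<omega>. \<lambda>i\<in>{..<length ts}. X (c * ts ! i) \<omega>) =
        distr M (PiM {..<length ts} (\<lambda>_. borel)) (\<lambda>\<omega>. \<lambda>i\<in>{..<length ts}. c powr \<beta> * X (ts ! i) \<omega>))"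

definition H1 :: "(real \<Rightarrow> real) \<Rightarrow> real \<Rightarrow> real \<Rightarrow> real \<Rightarrow> (real \<Rightarrow> real) \<Rightarrow> bool" where
  "H1 \<phi> \<beta> \<alpha> lam \<psi> \<longleftrightarrow>
     0 < \<alpha> \<and> \<alpha> \<le> 2 * \<beta> \<and> lam > 0 \<and>
     (\<forall>x\<ge>1. \<phi> x = - lam * (x - 1) powr \<alpha> + \<psi> x) \<and>
     (\<exists>S \<psi>' \<psi>'' C. open S \<and> {1..} \<subseteq> S \<and> C \<ge> 0 \<and>
        (\<forall>x\<in>S. (\<psi> has_real_derivative \<psi>' x) (at x) \<and> (\<psi>' has_real_derivative \<psi>'' x) (at x)) \<and>
        (\<forall>x>1. \<bar>\<psi>' x\<bar> \<le> C * x powr (\<alpha> - 1) \<and>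
               \<bar>\<psi>'' x\<bar> \<le> C * x powr (-1) * (x - 1) powr (\<alpha> - 1)) \<and>
        (\<alpha> \<ge> 1 \<longrightarrow> \<psi>' 1 = \<beta> * \<psi> 1))"

end

theory Submission
  imports Defs
begin

text \<open>
  Self-similarity gives
  E[(X(s+1) - X(s))^2] = ((s+1)^(2\<beta>) + s^(2\<beta>)) \<phi>(1) - 2 s^(2\<beta>) \<phi>(1 + 1/s),
  and (H.1) splits this into the leading term 2\<lambda> s^(2\<beta>-\<alpha>) plus s^(2\<beta>) g(1/s), where
  g(h) = ((1+h)^(2\<beta>) + 1) \<psi>(1) - 2 \<psi>(1+h). Since g(0) = 0 and \<psi> is C^1 near 1, the mean
  value theorem gives g(h) = O(h) as h \<rightarrow> 0. When \<alpha> \<ge> 1, the condition \<psi>'(1) = \<beta> \<psi>(1)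
  says g'(0) = 0, and \<psi>'' is bounded near 1, so g(h) = O(h^2). Hence
  u1(s) = s^\<alpha> g(1/s) / (2\<lambda>) is O(s^(\<alpha>-1)), resp. O(s^(\<alpha>-2)), for s bounded away from 0.
\<close>

lemma integrable_normal_density_square:
  assumes "0 < \<sigma>"
  shows "integrable lborel (\<lambda>x. normal_density \<mu> \<sigma> x * x\<^sup>2)"
proof -
  have "(\<lambda>x. normal_density \<mu> \<sigma> x * x\<^sup>2) = (\<lambda>x. normal_density \<mu> \<sigma> x * (x - \<mu>)\<^sup>2
      + 2 * \<mu> * (normal_density \<mu> \<sigma> x * (x - \<mu>)) + \<mu>\<^sup>2 * normal_density \<mu> \<sigma> x)"
    by (auto simp: fun_eq_iff power2_eq_square algebra_simps)
  then show ?thesis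
    using integrable_normal_moment[OF assms, of \<mu> 1] integrable_normal_moment[OF assms, of \<mu> 2]
    by (simp add: integrable_normal_density[OF assms])
qed

lemma gaussian_rv_square_integrable:
  assumes "prob_space M" "gaussian_rv M Y"
  shows "integrable M (\<lambda>\<omega>. Y \<omega> ^ 2)"
proof -
  interpret prob_space M by fact
  from assms(2) consider (nondegenerate) \<mu> \<sigma> where "0 < \<sigma>" "distributed M lborel Y (normal_density \<mu> \<sigma>)"
    | (degenerate) c where "AE \<omega> in M. Y \<omega> = c"
    unfolding gaussian_rv_def by blast
  then show ?thesis
  proof cases
    case nondegenerate
    then show ?thesis
      using distributed_integrable[OF nondegenerate(2), of "\<lambda>x. x\<^sup>2"] integrable_normal_density_square by simp
  next
    case degenerate
    have "integrable M (\<lambda>\<omega>. c\<^sup>2)" by simp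
    then show ?thesis
      by (rule integrable_cong_AE_imp) (use degenerate assms(2) in \<open>auto simp: gaussian_rv_def\<close>)
  qed
qed

lemma gaussian_process_square_integrable:
  assumes "prob_space M" "gaussian_process M X" "0 \<le> s" "0 \<le> t"
  shows "integrable M (\<lambda>\<omega>. (a * X s \<omega> + b * X t \<omega>)\<^sup>2)"
proof -
  have "gaussian_rv M (\<lambda>\<omega>. \<Sum>i<length [s, t]. [a, b] ! i * X ([s, t] ! i) \<omega>)"
    by (rule assms(2)[unfolded gaussian_process_def, THEN conjunct2, rule_format])
      (use assms(3,4) in auto)
  then have "gaussian_rv M (\<lambda>\<omega>. a * X s \<omega> + b * X t \<omega>)"
    by (simp add: eval_nat_numeral)
  then show ?thesis
    using gaussian_rv_square_integrable[OF assms(1)] by blast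
qed

lemma measurable_restrict_pair:
  fixes F :: "real \<Rightarrow> 'a \<Rightarrow> real"
  assumes "F a \<in> borel_measurable M" "F b \<in> borel_measurable M"
  shows "(\<lambda>\<omega>. \<lambda>i\<in>{..<length [a, b]}. F ([a, b] ! i) \<omega>) \<in> measurable M (PiM {..<length [a, b]} (\<lambda>_. borel))"
proof (rule measurable_restrict)
  fix i assume "i \<in> {..<length [a, b]}"
  then consider "i = 0" | "i = 1"
    by fastforce
  then show "(\<lambda>\<omega>. F ([a, b] ! i) \<omega>) \<in> borel_measurable M"
    by cases (use assms in simp_all)
qed

lemma self_similar_covariance_scaling:
  assumes "\<forall>t\<ge>0. X t \<in> borel_measurable M" "self_similar M X \<beta>" "0 < c" "0 \<le> a" "0 \<le> b"
  shows "integral\<^sup>L M (\<lambda>\<omega>. X (c * a) \<omega> * X (c * b) \<omega>)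
    = c powr (2 * \<beta>) * integral\<^sup>L M (\<lambda>\<omega>. X a \<omega> * X b \<omega>)"
proof -
  let ?P = "PiM {..<length [a, b]} (\<lambda>_. borel) :: (nat \<Rightarrow> real) measure"
  let ?F = "\<lambda>\<omega>. \<lambda>i\<in>{..<length [a, b]}. X (c * [a, b] ! i) \<omega>"
  let ?G = "\<lambda>\<omega>. \<lambda>i\<in>{..<length [a, b]}. c powr \<beta> * X ([a, b] ! i) \<omega>"
  have distr_eq: "distr M ?P ?F = distr M ?P ?G"
    by (rule assms(2)[unfolded self_similar_def, rule_format]) (use assms(3-5) in auto)
  have X: "X (c * a) \<in> borel_measurable M" "X (c * b) \<in> borel_measurable M"
    "X a \<in> borel_measurable M" "X b \<in> borel_measurable M"
    using assms(1,3-5) by simp_all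
  have F: "?F \<in> measurable M ?P"
    by (rule measurable_restrict_pair[of "\<lambda>t. X (c * t)"]) (fact X)+
  have G: "?G \<in> measurable M ?P"
    by (rule measurable_restrict_pair[of "\<lambda>t \<omega>. c powr \<beta> * X t \<omega>"]) (use X in simp_all)
  have prod: "(\<lambda>v::nat \<Rightarrow> real. v 0 * v 1) \<in> borel_measurable ?P"
    by measurable
  have "integral\<^sup>L M (\<lambda>\<omega>. X (c * a) \<omega> * X (c * b) \<omega>) = integral\<^sup>L (distr M ?P ?F) (\<lambda>v. v 0 * v 1)"
    by (subst integral_distr[OF F prod]) simp
  also have "\<dots> = integral\<^sup>L (distr M ?P ?G) (\<lambda>v. v 0 * v 1)"
    by (simp only: distr_eq)
  also have "\<dots> = integral\<^sup>L M (\<lambda>\<omega>. (c powr \<beta> * c powr \<beta>) * (X a \<omega> * X b \<omega>))"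
    by (subst integral_distr[OF G prod]) (simp add: ac_simps)
  also have "\<dots> = c powr (2 * \<beta>) * integral\<^sup>L M (\<lambda>\<omega>. X a \<omega> * X b \<omega>)"
    by (simp add: powr_add[symmetric])
  finally show ?thesis .
qed

lemma self_similar_increment_second_moment:
  assumes "prob_space M" "gaussian_process M X" "self_similar M X \<beta>" "0 < s"
  shows "integral\<^sup>L M (\<lambda>\<omega>. (X (s + 1) \<omega> - X s \<omega>)\<^sup>2) =
    ((s + 1) powr (2 * \<beta>) + s powr (2 * \<beta>)) * integral\<^sup>L M (\<lambda>\<omega>. X 1 \<omega> * X 1 \<omega>)
    - 2 * s powr (2 * \<beta>) * integral\<^sup>L M (\<lambda>\<omega>. X 1 \<omega> * X (1 + 1 / s) \<omega>)"
proof -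
  have meas: "\<forall>t\<ge>0. X t \<in> borel_measurable M"
    using assms(2) by (simp add: gaussian_process_def)
  have sq: "integrable M (\<lambda>\<omega>. (a * X (s + 1) \<omega> + b * X s \<omega>)\<^sup>2)" for a b
    using gaussian_process_square_integrable[OF assms(1,2)] assms(4) by simp
  have sq1: "integrable M (\<lambda>\<omega>. (X (s + 1) \<omega>)\<^sup>2)"
    using sq[of 1 0] by simp
  have sq2: "integrable M (\<lambda>\<omega>. (X s \<omega>)\<^sup>2)"
    using sq[of 0 1] by simp
  have "integrable M (\<lambda>\<omega>. ((X (s + 1) \<omega>)\<^sup>2 + (X s \<omega>)\<^sup>2 - (X (s + 1) \<omega> - X s \<omega>)\<^sup>2) / 2)"
    using sq1 sq2 sq[of 1 "-1"] by auto
  moreover have "(\<lambda>\<omega>. ((X (s + 1) \<omega>)\<^sup>2 + (X s \<omega>)\<^sup>2 - (X (s + 1) \<omega> - X s \<omega>)\<^sup>2) / 2)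
      = (\<lambda>\<omega>. X s \<omega> * X (s + 1) \<omega>)"
    by (auto simp: fun_eq_iff power2_eq_square algebra_simps)
  ultimately have prod: "integrable M (\<lambda>\<omega>. X s \<omega> * X (s + 1) \<omega>)"
    by simp
  have "(\<lambda>\<omega>. (X (s + 1) \<omega> - X s \<omega>)\<^sup>2)
      = (\<lambda>\<omega>. (X (s + 1) \<omega>)\<^sup>2 + (X s \<omega>)\<^sup>2 - 2 * (X s \<omega> * X (s + 1) \<omega>))"
    by (auto simp: fun_eq_iff power2_eq_square algebra_simps)
  then have "integral\<^sup>L M (\<lambda>\<omega>. (X (s + 1) \<omega> - X s \<omega>)\<^sup>2)
      = integral\<^sup>L M (\<lambda>\<omega>. (X (s + 1) \<omega>)\<^sup>2) + integral\<^sup>L M (\<lambda>\<omega>. (X s \<omega>)\<^sup>2)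
        - 2 * integral\<^sup>L M (\<lambda>\<omega>. X s \<omega> * X (s + 1) \<omega>)"
    using sq1 sq2 prod by simp
  moreover have "s * (1 + 1 / s) = s + 1"
    using assms(4) by (simp add: field_simps)
  ultimately show ?thesis
    using self_similar_covariance_scaling[OF meas assms(3), of "s + 1" 1 1]
      self_similar_covariance_scaling[OF meas assms(3), of s 1 1]
      self_similar_covariance_scaling[OF meas assms(3), of s 1 "1 + 1 / s"] assms(4)
    by (simp add: power2_eq_square distrib_right)
qed

lemma abs_le_power_if_deriv_bound:
  fixes f f' :: "real \<Rightarrow> real"
  assumes "f 0 = 0" "0 < h"
    and deriv: "\<And>x. 0 \<le> x \<Longrightarrow> x \<le> h \<Longrightarrow> (f has_real_derivative f' x) (at x)"
    and bound: "\<And>x. 0 < x \<Longrightarrow> x < h \<Longrightarrow> \<bar>f' x\<bar> \<le> K * x ^ n"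
  shows "\<bar>f h\<bar> \<le> K * h ^ Suc n"
proof -
  obtain z where z: "0 < z" "z < h" "f h - f 0 = (h - 0) * f' z"
    using MVT2[OF \<open>0 < h\<close> deriv] by blast
  have "0 \<le> K * z ^ n"
    using bound[OF z(1,2)] by linarith
  moreover have "0 < z ^ n"
    using z(1) by simp
  ultimately have "0 \<le> K"
    by (simp add: zero_le_mult_iff)
  have "\<bar>f h\<bar> = h * \<bar>f' z\<bar>"
    using z \<open>f 0 = 0\<close> \<open>0 < h\<close> by (simp add: abs_mult)
  also have "\<dots> \<le> h * (K * z ^ n)"
    using bound z \<open>0 < h\<close> by (intro mult_left_mono) auto
  also have "\<dots> \<le> h * (K * h ^ n)"
    using z \<open>0 \<le> K\<close> \<open>0 < h\<close> by (intro mult_left_mono power_mono) auto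
  finally show ?thesis
    by (simp add: mult_ac)
qed

definition increment_remainder :: "real \<Rightarrow> (real \<Rightarrow> real) \<Rightarrow> real \<Rightarrow> real" where
  "increment_remainder \<beta> \<psi> h = ((1 + h) powr (2 * \<beta>) + 1) * \<psi> 1 - 2 * \<psi> (1 + h)"

lemma increment_remainder_has_real_derivative:
  assumes "(\<psi> has_real_derivative \<psi>' (1 + h)) (at (1 + h))" "-1 < h"
  shows "(increment_remainder \<beta> \<psi> has_real_derivative
      2 * \<beta> * (1 + h) powr (2 * \<beta> - 1) * \<psi> 1 - 2 * \<psi>' (1 + h)) (at h)"
proof -
  have "((\<lambda>h. \<psi> (1 + h)) has_real_derivative \<psi>' (1 + h) * 1) (at h)"
    by (rule DERIV_chain2[where g = "\<lambda>h. 1 + h"]) (use assms(1) in \<open>auto intro!: derivative_eq_intros\<close>)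
  then show ?thesis
    unfolding increment_remainder_def[abs_def] using assms(2)
    by (auto intro!: derivative_eq_intros simp: algebra_simps)
qed

lemma increment_remainder_deriv_has_real_derivative:
  assumes "(\<psi>' has_real_derivative \<psi>'' (1 + h)) (at (1 + h))" "-1 < h"
  shows "((\<lambda>h. 2 * \<beta> * (1 + h) powr (2 * \<beta> - 1) * \<psi> 1 - 2 * \<psi>' (1 + h)) has_real_derivative
      2 * \<beta> * (2 * \<beta> - 1) * (1 + h) powr (2 * \<beta> - 2) * \<psi> 1 - 2 * \<psi>'' (1 + h)) (at h)"
proof -
  have "((\<lambda>h. \<psi>' (1 + h)) has_real_derivative \<psi>'' (1 + h) * 1) (at h)"
    by (rule DERIV_chain2[where g = "\<lambda>h. 1 + h"]) (use assms(1) in \<open>auto intro!: derivative_eq_intros\<close>)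
  then show ?thesis
    using assms(2) by (auto intro!: derivative_eq_intros simp: algebra_simps)
qed

lemma increment_remainder_0 [simp]: "increment_remainder \<beta> \<psi> 0 = 0"
  by (simp add: increment_remainder_def)

lemma increment_second_moment_decomposition:
  assumes \<phi>: "\<And>x. 1 \<le> x \<Longrightarrow> \<phi> x = - lam * (x - 1) powr \<alpha> + \<psi> x" and "0 < s"
  shows "((s + 1) powr (2 * \<beta>) + s powr (2 * \<beta>)) * \<phi> 1 - 2 * s powr (2 * \<beta>) * \<phi> (1 + 1 / s)
    = 2 * lam * s powr (2 * \<beta> - \<alpha>) + s powr (2 * \<beta>) * increment_remainder \<beta> \<psi> (1 / s)"
proof -
  have "s + 1 = s * (1 + 1 / s)"
    using \<open>0 < s\<close> by (simp add: field_simps)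
  then have "(s + 1) powr (2 * \<beta>) = s powr (2 * \<beta>) * (1 + 1 / s) powr (2 * \<beta>)"
    using \<open>0 < s\<close> by (simp add: powr_mult)
  moreover have "s powr (2 * \<beta>) * (1 / s) powr \<alpha> = s powr (2 * \<beta> - \<alpha>)"
    using \<open>0 < s\<close> by (simp add: powr_diff powr_divide)
  moreover have "\<phi> 1 = \<psi> 1" "\<phi> (1 + 1 / s) = - lam * (1 / s) powr \<alpha> + \<psi> (1 + 1 / s)"
    using \<phi> \<open>0 < s\<close> by simp_all
  ultimately show ?thesis
    unfolding increment_remainder_def by (simp only:) (simp add: algebra_simps)
qed

lemma increment_remainder_linear_bound:
  assumes deriv: "\<And>x. 1 \<le> x \<Longrightarrow> (\<psi> has_real_derivative \<psi>' x) (at x)"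
    and cont: "continuous_on {1..1 + H} \<psi>'"
  shows "\<exists>K. \<forall>h\<in>{0<..H}. \<bar>increment_remainder \<beta> \<psi> h\<bar> \<le> K * h"
proof -
  define g' where "g' h = 2 * \<beta> * (1 + h) powr (2 * \<beta> - 1) * \<psi> 1 - 2 * \<psi>' (1 + h)" for h
  have "continuous_on {0..H} g'"
    unfolding g'_def by (intro continuous_intros continuous_on_compose2[OF cont]) auto
  then obtain K where K: "\<And>x. x \<in> {0..H} \<Longrightarrow> \<bar>g' x\<bar> \<le> K"
    using continuous_on_compact_bound[of "{0..H}" g'] by auto
  have "\<bar>increment_remainder \<beta> \<psi> h\<bar> \<le> K * h ^ Suc 0" if "h \<in> {0<..H}" for h
    by (rule abs_le_power_if_deriv_bound[where f' = g'])
      (use that K in \<open>auto simp: g'_def intro!: increment_remainder_has_real_derivative deriv\<close>)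
  then show ?thesis
    by (intro exI[of _ K]) simp
qed

lemma increment_remainder_quadratic_bound:
  assumes deriv: "\<And>x. 1 \<le> x \<Longrightarrow> (\<psi> has_real_derivative \<psi>' x) (at x)"
    and deriv2: "\<And>x. 1 \<le> x \<Longrightarrow> (\<psi>' has_real_derivative \<psi>'' x) (at x)"
    and bound2: "\<And>x. 1 < x \<Longrightarrow> x < 1 + H \<Longrightarrow> \<bar>\<psi>'' x\<bar> \<le> B"
    and slope: "\<psi>' 1 = \<beta> * \<psi> 1"
  shows "\<exists>K. \<forall>h\<in>{0<..H}. \<bar>increment_remainder \<beta> \<psi> h\<bar> \<le> K * h\<^sup>2"
proof -
  define g' where "g' h = 2 * \<beta> * (1 + h) powr (2 * \<beta> - 1) * \<psi> 1 - 2 * \<psi>' (1 + h)" for h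
  define c where "c h = 2 * \<beta> * (2 * \<beta> - 1) * (1 + h) powr (2 * \<beta> - 2) * \<psi> 1" for h
  have "continuous_on {0..H} c"
    unfolding c_def by (intro continuous_intros) auto
  then obtain A where A: "\<And>x. x \<in> {0..H} \<Longrightarrow> \<bar>c x\<bar> \<le> A"
    using continuous_on_compact_bound[of "{0..H}" c] by auto
  have g'_bound: "\<bar>g' t\<bar> \<le> (A + 2 * B) * t ^ Suc 0" if "t \<in> {0<..H}" for t
  proof (rule abs_le_power_if_deriv_bound[where f' = "\<lambda>x. c x - 2 * \<psi>'' (1 + x)"])
    show "g' 0 = 0"
      by (simp add: g'_def slope)
    show "(g' has_real_derivative c x - 2 * \<psi>'' (1 + x)) (at x)" if "0 \<le> x" for x
      unfolding g'_def[abs_def] c_def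
      by (rule increment_remainder_deriv_has_real_derivative) (use that deriv2 in auto)
    show "\<bar>c x - 2 * \<psi>'' (1 + x)\<bar> \<le> (A + 2 * B) * x ^ 0" if "0 < x" "x < t" for x
      using A[of x] bound2[of "1 + x"] that \<open>t \<in> {0<..H}\<close> by auto
  qed (use that in auto)
  have "\<bar>increment_remainder \<beta> \<psi> h\<bar> \<le> (A + 2 * B) * h ^ Suc 1" if "h \<in> {0<..H}" for h
    by (rule abs_le_power_if_deriv_bound[where f' = g'])
      (use that g'_bound in \<open>auto simp: g'_def intro!: increment_remainder_has_real_derivative deriv\<close>)
  then show ?thesis
    by (intro exI[of _ "A + 2 * B"]) (simp add: numeral_2_eq_2)
qed

lemma H1_increment_remainder_bound:
  assumes "H1 \<phi> \<beta> \<alpha> lam \<psi>"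
  shows "\<exists>K. \<forall>h\<in>{0<..H}. \<bar>increment_remainder \<beta> \<psi> h\<bar> \<le> K * h ^ (if \<alpha> < 1 then 1 else 2)"
proof -
  from assms obtain S \<psi>' \<psi>'' C where "{1..} \<subseteq> S" "0 \<le> C"
    and deriv: "\<forall>x\<in>S. (\<psi> has_real_derivative \<psi>' x) (at x) \<and> (\<psi>' has_real_derivative \<psi>'' x) (at x)"
    and bound: "\<forall>x>1. \<bar>\<psi>'' x\<bar> \<le> C * x powr (-1) * (x - 1) powr (\<alpha> - 1)"
    and slope: "1 \<le> \<alpha> \<longrightarrow> \<psi>' 1 = \<beta> * \<psi> 1"
    unfolding H1_def by blast
  then have d1: "\<And>x. 1 \<le> x \<Longrightarrow> (\<psi> has_real_derivative \<psi>' x) (at x)"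
    and d2: "\<And>x. 1 \<le> x \<Longrightarrow> (\<psi>' has_real_derivative \<psi>'' x) (at x)"
    by auto
  show ?thesis
  proof (cases "\<alpha> < 1")
    case True
    have "continuous_on {1..1 + H} \<psi>'"
      using d2 by (auto intro!: continuous_at_imp_continuous_on DERIV_isCont)
    then show ?thesis
      using increment_remainder_linear_bound[OF d1] True by simp
  next
    case False
    have bound2: "\<bar>\<psi>'' x\<bar> \<le> C * H powr (\<alpha> - 1)" if "1 < x" "x < 1 + H" for x
    proof -
      have "\<bar>\<psi>'' x\<bar> \<le> C * x powr (-1) * (x - 1) powr (\<alpha> - 1)"
        using bound that by blast
      also have "\<dots> \<le> C * 1 * H powr (\<alpha> - 1)"
        using that False \<open>0 \<le> C\<close>
        by (intro mult_mono mult_left_mono powr_mono2) (auto simp: powr_minus_divide)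
      finally show ?thesis
        by simp
    qed
    moreover have "\<psi>' 1 = \<beta> * \<psi> 1"
      using slope False by simp
    ultimately show ?thesis
      using increment_remainder_quadratic_bound[OF d1 d2 bound2] False by simp
  qed
qed

lemma scaled_remainder_bound:
  fixes g :: "real \<Rightarrow> real"
  assumes "0 < lam" "0 < \<eta>" and g: "\<forall>h\<in>{0<..1 / \<eta>}. \<bar>g h\<bar> \<le> K * h ^ n"
  shows "\<exists>C>0. \<forall>s\<ge>\<eta>. \<bar>s powr \<alpha> * g (1 / s) / (2 * lam)\<bar> \<le> C * s powr (\<alpha> - real n)"
proof (intro exI[of _ "\<bar>K\<bar> / (2 * lam) + 1"] conjI allI impI)
  show "0 < \<bar>K\<bar> / (2 * lam) + 1"
    using \<open>0 < lam\<close> by (simp add: add_nonneg_pos)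
  fix s assume "\<eta> \<le> s"
  then have "0 < s"
    using \<open>0 < \<eta>\<close> by linarith
  have "1 / s \<in> {0<..1 / \<eta>}"
    using \<open>0 < \<eta>\<close> \<open>\<eta> \<le> s\<close> by (simp add: frac_le)
  then have "\<bar>g (1 / s)\<bar> \<le> K * (1 / s) ^ n"
    using g by blast
  also have "\<dots> \<le> \<bar>K\<bar> * (1 / s) ^ n"
    using \<open>0 < s\<close> by (intro mult_right_mono) auto
  finally have g_bound: "\<bar>g (1 / s)\<bar> \<le> \<bar>K\<bar> * (1 / s) ^ n" .
  have "\<bar>s powr \<alpha> * g (1 / s) / (2 * lam)\<bar> = s powr \<alpha> * \<bar>g (1 / s)\<bar> / (2 * lam)"
    using \<open>0 < lam\<close> by (simp add: abs_mult)
  also have "\<dots> \<le> s powr \<alpha> * (\<bar>K\<bar> * (1 / s) ^ n) / (2 * lam)"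
    using \<open>0 < lam\<close> g_bound by (intro divide_right_mono mult_left_mono) auto
  also have "\<dots> = \<bar>K\<bar> / (2 * lam) * (s powr \<alpha> * (1 / s) ^ n)"
    by simp
  also have "s powr \<alpha> * (1 / s) ^ n = s powr (\<alpha> - real n)"
    using \<open>0 < s\<close> by (simp add: powr_diff powr_realpow divide_simps)
  also have "\<bar>K\<bar> / (2 * lam) * s powr (\<alpha> - real n) \<le> (\<bar>K\<bar> / (2 * lam) + 1) * s powr (\<alpha> - real n)"
    by (intro mult_right_mono) auto
  finally show "\<bar>s powr \<alpha> * g (1 / s) / (2 * lam)\<bar> \<le> (\<bar>K\<bar> / (2 * lam) + 1) * s powr (\<alpha> - real n)" .
qed

lemma H1_continuous_on:
  assumes "H1 \<phi> \<beta> \<alpha> lam \<psi>"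
  shows "continuous_on {1..} \<psi>"
  using assms unfolding H1_def
  by (blast intro: continuous_at_imp_continuous_on DERIV_isCont)

lemma H1_scaled_remainder_bound:
  assumes "H1 \<phi> \<beta> \<alpha> lam \<psi>" "0 < \<eta>"
  shows "\<exists>C>0. \<forall>s\<ge>\<eta>. \<bar>s powr \<alpha> * increment_remainder \<beta> \<psi> (1 / s) / (2 * lam)\<bar>
    \<le> C * s powr (- (if \<alpha> < 1 then 1 - \<alpha> else 2 - \<alpha>))"
proof -
  have "0 < lam"
    using assms(1) by (simp add: H1_def)
  obtain K where K: "\<forall>h\<in>{0<..1 / \<eta>}.
      \<bar>increment_remainder \<beta> \<psi> h\<bar> \<le> K * h ^ (if \<alpha> < 1 then 1 else 2)"
    using H1_increment_remainder_bound[OF assms(1)] by blast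
  obtain C where "0 < C" and "\<forall>s\<ge>\<eta>. \<bar>s powr \<alpha> * increment_remainder \<beta> \<psi> (1 / s) / (2 * lam)\<bar>
      \<le> C * s powr (\<alpha> - real (if \<alpha> < 1 then 1 else 2))"
    using scaled_remainder_bound[OF \<open>0 < lam\<close> assms(2) K] by blast
  then show ?thesis
    by (intro exI[of _ C]) (cases "\<alpha> < 1"; simp)
qed

lemma H1_increment_second_moment:
  assumes "prob_space M" "gaussian_process M X" "self_similar M X \<beta>"
    and "H1 (\<lambda>x. integral\<^sup>L M (\<lambda>\<omega>. X 1 \<omega> * X x \<omega>)) \<beta> \<alpha> lam \<psi>" "0 < s"
  shows "integral\<^sup>L M (\<lambda>\<omega>. (X (s + 1) \<omega> - X s \<omega>)\<^sup>2)
    = 2 * lam * s powr (2 * \<beta> - \<alpha>) + s powr (2 * \<beta>) * increment_remainder \<beta> \<psi> (1 / s)"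
proof -
  have "\<And>x. 1 \<le> x \<Longrightarrow> integral\<^sup>L M (\<lambda>\<omega>. X 1 \<omega> * X x \<omega>) = - lam * (x - 1) powr \<alpha> + \<psi> x"
    using assms(4) by (simp add: H1_def)
  from increment_second_moment_decomposition[OF this assms(5)] show ?thesis
    using self_similar_increment_second_moment[OF assms(1-3,5)] by simp
qed

theorem lemma4p1:
  fixes M :: "'a measure" and X :: "real \<Rightarrow> 'a \<Rightarrow> real"
    and \<beta> \<alpha> lam :: real and \<psi> :: "real \<Rightarrow> real"
  assumes "prob_space M"
    and "gaussian_process M X" and "centered_process M X"
    and "0 < \<beta>" and "\<beta> < 1"
    and "self_similar M X \<beta>"
    and "H1 (\<lambda>x. integral\<^sup>L M (\<lambda>\<omega>. X 1 \<omega> * X x \<omega>)) \<beta> \<alpha> lam \<psi>"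
  shows "\<exists>u1 :: real \<Rightarrow> real. continuous_on {0<..} u1 \<and>
     (\<forall>s>0. integral\<^sup>L M (\<lambda>\<omega>. (X (s + 1) \<omega> - X s \<omega>)^2)
              = 2 * lam * s powr (2 * \<beta> - \<alpha>) * (1 + u1 s)) \<and>
     (\<forall>\<eta>>0. \<exists>C\<eta>>0. \<forall>s\<ge>\<eta>.
        \<bar>u1 s\<bar> \<le> C\<eta> * s powr (- (if \<alpha> < 1 then 1 - \<alpha> else 2 - \<alpha>)))"
proof -
  note H1 = assms(7)
  then have "0 < lam"
    by (simp add: H1_def)
  define u1 where "u1 s = s powr \<alpha> * increment_remainder \<beta> \<psi> (1 / s) / (2 * lam)" for s
  have "continuous_on {0<..} u1"
    unfolding u1_def[abs_def] increment_remainder_def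
    by (intro continuous_intros continuous_on_compose2[OF H1_continuous_on[OF H1]])
      (use \<open>0 < lam\<close> in \<open>auto simp: field_simps\<close>)
  moreover have "integral\<^sup>L M (\<lambda>\<omega>. (X (s + 1) \<omega> - X s \<omega>)\<^sup>2) = 2 * lam * s powr (2 * \<beta> - \<alpha>) * (1 + u1 s)"
    if "0 < s" for s
    using H1_increment_second_moment[OF assms(1,2,6,7) that] \<open>0 < lam\<close> that
    by (simp add: u1_def powr_diff field_simps)
  moreover have "\<forall>\<eta>>0. \<exists>C\<eta>>0. \<forall>s\<ge>\<eta>. \<bar>u1 s\<bar> \<le> C\<eta> * s powr (- (if \<alpha> < 1 then 1 - \<alpha> else 2 - \<alpha>))"
    unfolding u1_def using H1_scaled_remainder_bound[OF H1] by blast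
  ultimately show ?thesis
    by blast
qed

end
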